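(* Let $N_7$ be the connected, simply connected nilpotent Lie group with Lie algebra $\mathfrak{n}_7$ spanned by $X_1,\dots,X_7$ with non-trivial brackets $[X_1,X_3]=X_5,\ [X_1,X_4]=X_6,\ [X_1,X_5]=X_7,\ [X_2,X_3]=-X_6,\ [X_2,X_4]=X_5,\ [X_2,X_6]=X_7$. Let $\Gamma_2\subset\mathfrak{n}_7^*/N_7$ be the set of coadjoint orbits of linear functionals $f=\sum_i f_iX_i^*$ with $f_7\neq 0$. Then $\Gamma_2$, with the relative topology of the orbit space $\mathfrak{n}_7^*/N_7$ (quotient topology), is Hausdorff, and $\Gamma_2$ is homeomorphic to $\mathbb R^2\times\mathbb R^*$ via $(f_3,f_4,f_7)\mapsto \mathcal O_{(f_3,f_4,f_7)}$.
   Context: $N_7$ acts on $\mathfrak{n}_7^*$ by the coadjoint action $\mathrm{Ad}^*(g)f=f\circ\mathrm{Ad}(g^{-1})$; $X_1^*,\dots,X_7^*$ is the dual basis. For $f_7\neq0$, every coadjoint orbit with $X_7^*$-coordinate $f_7$ contains exactly one functional of the form $f_3X_3^*+f_4X_4^*+f_7X_7^*$, and $\mathcal O_{(f_3,f_4,f_7)}$ denotes the orbit of this functional; explicitly $\mathcal O_{(f_3,f_4,f_7)}=\{(x_1,x_2,f_3+\frac{x_5^2-x_6^2}{2f_7},f_4+\frac{x_5x_6}{f_7},x_5,x_6,f_7): x_1,x_2,x_5,x_6\in\mathbb R\}$ in coordinates with respect to $X_1^*,\dots,X_7^*$. *)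

theory Defs
  imports "HOL-Analysis.Analysis" "HOL-Library.Numeral_Type"
begin

text \<open>Elements of n7 and of its dual are coordinate vectors in real^7 w.r.t. the bases
  X_1..X_7 resp. X_1^*..X_7^*; the indices are the numerals 1,...,7 of type 7
  (these are seven distinct elements; 7 denotes the residue 0).\<close>

definition n7_bracket :: "real^7 \<Rightarrow> real^7 \<Rightarrow> real^7" where
  "n7_bracket x y = (\<chi> j.
     if j = 5 then (x$1*y$3 - x$3*y$1) + (x$2*y$4 - x$4*y$2)
     else if j = 6 then (x$1*y$4 - x$4*y$1) - (x$2*y$3 - x$3*y$2)
     else if j = 7 then (x$1*y$5 - x$5*y$1) + (x$2*y$6 - x$6*y$2)
     else 0)"

text \<open>Ad(exp Y) = e^{ad Y}; ad Y is nilpotent, so the exponential series is finite.\<close>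
definition n7_Ad :: "real^7 \<Rightarrow> real^7 \<Rightarrow> real^7" where
  "n7_Ad Y Z = (\<Sum>k<7. (1 / fact k) *\<^sub>R (((n7_bracket Y) ^^ k) Z))"

text \<open>Coadjoint action of g = exp Y: Ad*(g) f = f \<circ> Ad(g^{-1}) = f \<circ> Ad(exp(-Y)).
  Since exp : n7 \<rightarrow> N7 is a bijection, Y ranges over all of N7.\<close>
definition n7_coadj :: "real^7 \<Rightarrow> real^7 \<Rightarrow> real^7" where
  "n7_coadj Y f = (\<chi> j. f \<bullet> n7_Ad (- Y) (axis j 1))"

definition coadj_orbit :: "real^7 \<Rightarrow> (real^7) set" where
  "coadj_orbit f = range (\<lambda>Y. n7_coadj Y f)"

definition n7_orbits :: "(real^7) set set" where
  "n7_orbits = range coadj_orbit"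

definition orbit_space :: "(real^7) set topology" where
  "orbit_space = topology (\<lambda>U. U \<subseteq> n7_orbits \<and> open {f. coadj_orbit f \<in> U})"

definition Gamma2 :: "(real^7) set set" where
  "Gamma2 = {S \<in> n7_orbits. \<exists>f\<in>S. f$7 \<noteq> 0}"

definition std_functional :: "real \<Rightarrow> real \<Rightarrow> real \<Rightarrow> real^7" where
  "std_functional a b c = (\<chi> j. if j = 3 then a else if j = 4 then b else if j = 7 then c else 0)"

end

theory Submission
  imports Defs
begin

(* Since ad Y is nilpotent of order 3, Ad(exp Y) = 1 + ad Y + (ad Y)^2 / 2 and the coadjoint
   action is explicit.  On the open saturated set f_7 \<noteq> 0 the map
   f \<mapsto> (f_3 - (f_5^2 - f_6^2) / (2 f_7), f_4 - f_5 f_6 / f_7, f_7) is a continuous complete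
   invariant of the action, and (a, b, c) \<mapsto> a X_3^* + b X_4^* + c X_7^* is a continuous section
   of it.  For any quotient topology, an open saturated set with a continuous complete invariant
   admitting a continuous section has image homeomorphic to the range of the section, here
   R^2 \<times> R^*, which is Hausdorff. *)

definition quotient_topology :: "('a::topological_space \<Rightarrow> 'b) \<Rightarrow> 'b topology" where
  "quotient_topology p = topology (\<lambda>U. U \<subseteq> range p \<and> open (p -` U))"

lemma openin_quotient_topology:
  "openin (quotient_topology p) U \<longleftrightarrow> U \<subseteq> range p \<and> open (p -` U)"
proof -
  have "istopology (\<lambda>U. U \<subseteq> range p \<and> open (p -` U))"
    unfolding istopology_def vimage_Int vimage_Union by (auto intro!: open_UN)
  then show ?thesis by (simp add: quotient_topology_def)
qed

lemma topspace_quotient_topology: "topspace (quotient_topology p) = range p"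
proof
  show "topspace (quotient_topology p) \<subseteq> range p"
    using openin_quotient_topology[of p "topspace (quotient_topology p)"] by simp
  have "p -` range p = UNIV" by blast
  then have "openin (quotient_topology p) (range p)"
    by (simp add: openin_quotient_topology)
  then show "range p \<subseteq> topspace (quotient_topology p)"
    by (rule openin_subset)
qed

lemma continuous_map_quotient_topology: "continuous_map euclidean (quotient_topology p) p"
  unfolding continuous_map_def topspace_quotient_topology openin_quotient_topology
  by (simp add: vimage_def)

lemma homeomorphic_map_quotient_topology_section:
  fixes p :: "'a::topological_space \<Rightarrow> 'b" and q :: "'a \<Rightarrow> 'c::topological_space"
  assumes "open A"
    and saturated: "\<And>x y. x \<in> A \<Longrightarrow> p y = p x \<Longrightarrow> y \<in> A"
    and fibres: "\<And>x y. x \<in> A \<Longrightarrow> y \<in> A \<Longrightarrow> p x = p y \<longleftrightarrow> q x = q y"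
    and q: "continuous_on A q" "q ` A \<subseteq> D"
    and s: "continuous_on D s" "s ` D \<subseteq> A" "\<And>d. d \<in> D \<Longrightarrow> q (s d) = d"
  shows "homeomorphic_map (top_of_set D) (subtopology (quotient_topology p) (p ` A)) (p \<circ> s)"
proof -
  have image_section: "(p \<circ> s) ` V = p ` (A \<inter> q -` V)" if "V \<subseteq> D" for V
  proof
    show "(p \<circ> s) ` V \<subseteq> p ` (A \<inter> q -` V)"
    proof
      fix y assume "y \<in> (p \<circ> s) ` V"
      then obtain d where d: "d \<in> V" "y = p (s d)" by auto
      then have "s d \<in> A \<inter> q -` V" using that s by auto
      then show "y \<in> p ` (A \<inter> q -` V)" using d by blast
    qed
    show "p ` (A \<inter> q -` V) \<subseteq> (p \<circ> s) ` V"
    proof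
      fix y assume "y \<in> p ` (A \<inter> q -` V)"
      then obtain x where x: "x \<in> A" "q x \<in> V" and y: "y = p x" by blast
      then have "s (q x) \<in> A" "q (s (q x)) = q x" using that s by auto
      then have "p (s (q x)) = p x" using fibres x by blast
      then show "y \<in> (p \<circ> s) ` V" using x y by force
    qed
  qed
  have saturated_preimage: "p -` p ` (A \<inter> q -` V) = A \<inter> q -` V" for V
  proof
    show "p -` p ` (A \<inter> q -` V) \<subseteq> A \<inter> q -` V"
    proof
      fix y assume "y \<in> p -` p ` (A \<inter> q -` V)"
      then obtain x where x: "x \<in> A" "q x \<in> V" "p y = p x" by auto
      then have "y \<in> A" using saturated by blast
      then show "y \<in> A \<inter> q -` V" using x fibres by auto
    qed
  qed blast
  have open_map: "open_map (top_of_set D) (quotient_topology p) (p \<circ> s)"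
    unfolding open_map_def
  proof (intro allI impI)
    fix V assume "openin (top_of_set D) V"
    then obtain T where T: "open T" "V = D \<inter> T" by (meson openin_open)
    have "A \<inter> q -` V = A \<inter> q -` T" using q(2) T(2) by blast
    then have "open (A \<inter> q -` V)"
      using continuous_open_preimage[OF q(1) \<open>open A\<close> T(1)] by simp
    moreover have "(p \<circ> s) ` V = p ` (A \<inter> q -` V)"
      using image_section T(2) by simp
    ultimately show "openin (quotient_topology p) ((p \<circ> s) ` V)"
      by (simp add: openin_quotient_topology saturated_preimage image_mono)
  qed
  show ?thesis
  proof (rule bijective_open_imp_homeomorphic_map)
    show "continuous_map (top_of_set D) (subtopology (quotient_topology p) (p ` A)) (p \<circ> s)"
      using continuous_map_compose[of "top_of_set D" euclidean s, OF _ continuous_map_quotient_topology] s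
      by (auto simp: continuous_map_in_subtopology)
    show "open_map (top_of_set D) (subtopology (quotient_topology p) (p ` A)) (p \<circ> s)"
      using open_map s by (intro open_map_into_subtopology) auto
    show "(p \<circ> s) ` topspace (top_of_set D) = topspace (subtopology (quotient_topology p) (p ` A))"
      using image_section[of D] q by (auto simp: topspace_quotient_topology)
    show "inj_on (p \<circ> s) (topspace (top_of_set D))"
    proof (rule inj_onI)
      fix d e assume "d \<in> topspace (top_of_set D)" "e \<in> topspace (top_of_set D)"
        and "(p \<circ> s) d = (p \<circ> s) e"
      then have "d \<in> D" "e \<in> D" "p (s d) = p (s e)" by auto
      then have "q (s d) = q (s e)" using fibres s(2) by blast
      then show "d = e" using s(3) \<open>d \<in> D\<close> \<open>e \<in> D\<close> by metis
    qed
  qed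
qed

lemma exhaust_7:
  fixes x :: 7
  shows "x = 1 \<or> x = 2 \<or> x = 3 \<or> x = 4 \<or> x = 5 \<or> x = 6 \<or> x = 7"
proof (induct x)
  case (of_int z)
  then have "z = 0 \<or> z = 1 \<or> z = 2 \<or> z = 3 \<or> z = 4 \<or> z = 5 \<or> z = 6" by fastforce
  then show ?case by auto
qed

lemma UNIV_7: "UNIV = {1, 2, 3, 4, 5, 6, 7 :: 7}"
  using exhaust_7 by auto

lemma sum_UNIV_7: "sum f (UNIV :: 7 set) = f 1 + f 2 + f 3 + f 4 + f 5 + f 6 + f 7"
  unfolding UNIV_7 by (simp add: ac_simps)

lemma vec7_eqI:
  fixes x y :: "'a^7"
  assumes "x$1 = y$1" "x$2 = y$2" "x$3 = y$3" "x$4 = y$4" "x$5 = y$5" "x$6 = y$6" "x$7 = y$7"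
  shows "x = y"
  unfolding vec_eq_iff
proof
  fix i :: 7
  show "x$i = y$i" using exhaust_7[of i] assms by (elim disjE) simp_all
qed

lemma n7_bracket_nth:
  "n7_bracket x y $ 1 = 0" "n7_bracket x y $ 2 = 0" "n7_bracket x y $ 3 = 0"
  "n7_bracket x y $ 4 = 0"
  "n7_bracket x y $ 5 = (x$1*y$3 - x$3*y$1) + (x$2*y$4 - x$4*y$2)"
  "n7_bracket x y $ 6 = (x$1*y$4 - x$4*y$1) - (x$2*y$3 - x$3*y$2)"
  "n7_bracket x y $ 7 = (x$1*y$5 - x$5*y$1) + (x$2*y$6 - x$6*y$2)"
  by (simp_all add: n7_bracket_def)

lemma n7_bracket_zero_right: "n7_bracket x 0 = 0"
  by (rule vec7_eqI) (simp_all add: n7_bracket_nth)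

lemma n7_bracket_nilpotent: "n7_bracket x (n7_bracket x (n7_bracket x y)) = 0"
  by (rule vec7_eqI) (simp_all add: n7_bracket_nth)

lemma n7_Ad_eq: "n7_Ad Y Z = Z + n7_bracket Y Z + (1/2) *\<^sub>R n7_bracket Y (n7_bracket Y Z)"
  by (simp add: n7_Ad_def eval_nat_numeral n7_bracket_nilpotent n7_bracket_zero_right)

lemma n7_coadj_nth:
  "n7_coadj Y f $ 1 = f$1 + Y$3*f$5 + Y$4*f$6 + Y$5*f$7 - (Y$1*Y$3 + Y$2*Y$4)*f$7/2"
  "n7_coadj Y f $ 2 = f$2 + Y$4*f$5 - Y$3*f$6 + Y$6*f$7 + (Y$2*Y$3 - Y$1*Y$4)*f$7/2"
  "n7_coadj Y f $ 3 = f$3 - Y$1*f$5 + Y$2*f$6 + ((Y$1)^2 - (Y$2)^2)*f$7/2"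
  "n7_coadj Y f $ 4 = f$4 - Y$2*f$5 - Y$1*f$6 + Y$1*Y$2*f$7"
  "n7_coadj Y f $ 5 = f$5 - Y$1*f$7"
  "n7_coadj Y f $ 6 = f$6 - Y$2*f$7"
  "n7_coadj Y f $ 7 = f$7"
  by (simp_all add: n7_coadj_def n7_Ad_eq inner_vec_def sum_UNIV_7 n7_bracket_nth axis_def
      algebra_simps power2_eq_square) (simp_all add: field_simps)

lemma n7_coadj_zero: "n7_coadj 0 f = f"
  by (rule vec7_eqI) (simp_all add: n7_coadj_nth)

lemma self_in_coadj_orbit: "f \<in> coadj_orbit f"
  unfolding coadj_orbit_def by (metis n7_coadj_zero rangeI)

lemma coadj_orbit_nth_7: "g \<in> coadj_orbit f \<Longrightarrow> g$7 = f$7"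
  by (auto simp: coadj_orbit_def n7_coadj_nth)

lemma coadj_orbit_eq_nth_7: "coadj_orbit f = coadj_orbit g \<Longrightarrow> f$7 = g$7"
  using coadj_orbit_nth_7 self_in_coadj_orbit by metis

lemma std_functional_nth:
  "std_functional a b c $ 1 = 0" "std_functional a b c $ 2 = 0" "std_functional a b c $ 3 = a"
  "std_functional a b c $ 4 = b" "std_functional a b c $ 5 = 0" "std_functional a b c $ 6 = 0"
  "std_functional a b c $ 7 = c"
  by (simp_all add: std_functional_def)

definition n7_invariant :: "real^7 \<Rightarrow> real \<times> real \<times> real" where
  "n7_invariant f = (f$3 - ((f$5)^2 - (f$6)^2) / (2 * f$7), f$4 - f$5 * f$6 / f$7, f$7)"

lemma n7_invariant_coadj:
  assumes "f$7 \<noteq> 0"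
  shows "n7_invariant (n7_coadj Y f) = n7_invariant f"
  using assms unfolding n7_invariant_def n7_coadj_nth
  by (simp add: field_simps power2_eq_square)

lemma n7_invariant_std_functional: "n7_invariant (std_functional a b c) = (a, b, c)"
  by (simp add: n7_invariant_def std_functional_nth)

lemma n7_coadj_transitive:
  assumes h7: "h$7 \<noteq> 0" and inv: "n7_invariant h = n7_invariant g"
  shows "\<exists>Y. n7_coadj Y h = g"
proof -
  define c where "c = h$7"
  have c0: "c \<noteq> 0" and g7: "g$7 = c"
    using h7 inv by (simp_all add: n7_invariant_def c_def)
  have h3: "h$3 = g$3 - ((g$5)^2 - (g$6)^2) / (2 * c) + ((h$5)^2 - (h$6)^2) / (2 * c)"
   and h4: "h$4 = g$4 - g$5 * g$6 / c + h$5 * h$6 / c"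
    using inv g7 by (simp_all add: n7_invariant_def c_def)
  \<comment> \<open>Coordinates 5, 6 force Y_1, Y_2 and coordinates 1, 2 force Y_5, Y_6; with Y_3 = Y_4 = 0,
    coordinates 3 and 4 then agree because the invariants do.\<close>
  define Y :: "real^7" where "Y = (\<chi> i. if i = 1 then (h$5 - g$5) / c else if i = 2 then (h$6 - g$6) / c
      else if i = 5 then (g$1 - h$1) / c else if i = 6 then (g$2 - h$2) / c else 0)"
  have Y: "Y$1 = (h$5 - g$5) / c" "Y$2 = (h$6 - g$6) / c" "Y$3 = 0" "Y$4 = 0"
     "Y$5 = (g$1 - h$1) / c" "Y$6 = (g$2 - h$2) / c"
    by (simp_all add: Y_def)
  have "n7_coadj Y h = g"
  proof (rule vec7_eqI)
    show "n7_coadj Y h $ 3 = g $ 3"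
      using c0 unfolding n7_coadj_nth Y c_def[symmetric] h3
      by (simp add: field_simps power2_eq_square; algebra)
    show "n7_coadj Y h $ 4 = g $ 4"
      using c0 unfolding n7_coadj_nth Y c_def[symmetric] h4
      by (simp add: field_simps power2_eq_square; algebra)
  qed (use c0 g7 in \<open>simp_all add: n7_coadj_nth Y c_def[symmetric]\<close>)
  then show ?thesis by blast
qed

lemma coadj_orbit_eq_level_set:
  assumes "f$7 \<noteq> 0"
  shows "coadj_orbit f = {g. n7_invariant g = n7_invariant f}"
proof
  show "coadj_orbit f \<subseteq> {g. n7_invariant g = n7_invariant f}"
    using n7_invariant_coadj[OF assms] by (auto simp: coadj_orbit_def)
  show "{g. n7_invariant g = n7_invariant f} \<subseteq> coadj_orbit f"
  proof
    fix g assume "g \<in> {g. n7_invariant g = n7_invariant f}"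
    then obtain Y where "n7_coadj Y f = g"
      using n7_coadj_transitive[OF assms] by force
    then show "g \<in> coadj_orbit f" by (auto simp: coadj_orbit_def)
  qed
qed

lemma coadj_orbit_eq_iff:
  assumes "f$7 \<noteq> 0" "g$7 \<noteq> 0"
  shows "coadj_orbit f = coadj_orbit g \<longleftrightarrow> n7_invariant f = n7_invariant g"
  unfolding coadj_orbit_eq_level_set[OF assms(1)] coadj_orbit_eq_level_set[OF assms(2)]
  by (metis (mono_tags) mem_Collect_eq)

lemma Gamma2_eq_image: "Gamma2 = coadj_orbit ` {f. f$7 \<noteq> 0}"
proof -
  have "(\<exists>g\<in>coadj_orbit f. g$7 \<noteq> 0) \<longleftrightarrow> f$7 \<noteq> 0" for f
    using coadj_orbit_nth_7 self_in_coadj_orbit by metis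
  then show ?thesis by (auto simp: Gamma2_def n7_orbits_def)
qed

lemma orbit_space_eq_quotient_topology: "orbit_space = quotient_topology coadj_orbit"
  by (simp add: orbit_space_def quotient_topology_def n7_orbits_def vimage_def)

lemma open_nth_7_nonzero: "open {f :: real^7. f$7 \<noteq> 0}"
  using open_vimage_vec_nth[of "- {0 :: real}" "7 :: 7"] by (simp add: open_Compl vimage_def)

lemma continuous_on_n7_invariant: "continuous_on {f. f$7 \<noteq> 0} n7_invariant"
  unfolding n7_invariant_def by (intro continuous_intros) auto

lemma continuous_on_std_functional: "continuous_on S (\<lambda>(a, b, c). std_functional a b c)"
proof -
  have "std_functional a b c = a *\<^sub>R axis 3 1 + b *\<^sub>R axis 4 1 + c *\<^sub>R axis 7 1" for a b c
    by (rule vec7_eqI) (simp_all add: std_functional_nth axis_def)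
  then show ?thesis by (simp add: case_prod_beta) (intro continuous_intros)
qed

theorem mainTheorem2:
  shows "Hausdorff_space (subtopology orbit_space Gamma2) \<and>
    homeomorphic_map (top_of_set {p :: real \<times> real \<times> real. snd (snd p) \<noteq> 0})
      (subtopology orbit_space Gamma2)
      (\<lambda>(a, b, c). coadj_orbit (std_functional a b c))"
proof -
  let ?D = "{p :: real \<times> real \<times> real. snd (snd p) \<noteq> 0}"
  have orbit_of_section: "(\<lambda>(a, b, c). coadj_orbit (std_functional a b c))
      = coadj_orbit \<circ> (\<lambda>(a, b, c). std_functional a b c)"
    by (simp add: fun_eq_iff)
  have homeo: "homeomorphic_map (top_of_set ?D) (subtopology orbit_space Gamma2)
      (\<lambda>(a, b, c). coadj_orbit (std_functional a b c))"
    unfolding orbit_of_section orbit_space_eq_quotient_topology Gamma2_eq_image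
  proof (rule homeomorphic_map_quotient_topology_section)
    show "n7_invariant ` {f. f$7 \<noteq> 0} \<subseteq> ?D"
      by (auto simp: n7_invariant_def)
    show "(\<lambda>(a, b, c). std_functional a b c) ` ?D \<subseteq> {f. f$7 \<noteq> 0}"
      by (auto simp: std_functional_nth)
  qed (auto simp: open_nth_7_nonzero coadj_orbit_eq_iff continuous_on_n7_invariant
      continuous_on_std_functional n7_invariant_std_functional dest: coadj_orbit_eq_nth_7)
  moreover have "Hausdorff_space (subtopology orbit_space Gamma2)"
    using homeomorphic_Hausdorff_space[OF homeomorphic_map_imp_homeomorphic_space[OF homeo]]
    by (simp add: Hausdorff_space_subtopology)
  ultimately show ?thesis by blast
qed

end
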